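(* Let $(f,g)$ be a Jacobian pair, $\xi$ a generic element of $\mathbb K$, $f_\xi=f-\xi$. Let $\alpha=\sum a_jt^j$ be a root of $f_\xi(y)$ in $\mathbb K\ll t\gg$, let $\delta=\max\{\operatorname{ord}(\alpha-\beta): g(\beta)=0\}$ and let $\sigma=\sum_{j<\delta}a_jt^j+\pi t^\delta$ be the related final $\pi$-root. Then: (i) if $\alpha$ is a major root, then $\delta<1$; (ii) if $\alpha$ is a minor root, then $\delta>1$.
   Context: $\mathbb K$ is an algebraically closed field of characteristic $0$. A Jacobian pair is a pair $(f,g)$ in $\mathbb K[x,y]$, both monic in $y$, with $f_xg_y-f_yg_x\in\mathbb K^*$. Put $x=t^{-1}$; for $h\in\mathbb K[x,y]$ write $h(y)=h(t^{-1},y)$, a polynomial in $y$ over the Puiseux field $\mathbb K\ll t\gg$; $\operatorname{ord}$ is the smallest exponent of $t$ with nonzero coefficient; $\beta$ ranges over roots of $g(y)$ in $\mathbb K\ll t\gg$; $\pi$ is an indeterminate. A root $\alpha$ of $f_\xi(y)$ is called major if $\operatorname{ord}g(\alpha)<0$ and minor if $\operatorname{ord}g(\alpha)=0$. *)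

theory Defs
  imports "HOL-Computational_Algebra.Polynomial" "HOL-Computational_Algebra.Formal_Laurent_Series"
begin

text \<open>Bivariate polynomials K[x,y] are represented as 'a poly poly:
  the outer variable is y, the coefficients are polynomials in x.\<close>

definition partial_x :: "'a::field poly poly \<Rightarrow> 'a poly poly" where
  "partial_x h = map_poly pderiv h"

definition partial_y :: "'a::field poly poly \<Rightarrow> 'a poly poly" where
  "partial_y h = pderiv h"

definition jacobian_pair :: "'a::field poly poly \<Rightarrow> 'a poly poly \<Rightarrow> bool" where
  "jacobian_pair f g \<longleftrightarrow> lead_coeff f = 1 \<and> lead_coeff g = 1 \<and>
     (\<exists>c. c \<noteq> 0 \<and> partial_x f * partial_y g - partial_y f * partial_x g = [:[:c:]:])"

text \<open>Substitution x = t^{-1} with t = s^N, giving a polynomial in y over the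
  Laurent series field K((s)) = K((t^{1/N})) \<subseteq> Puiseux field.\<close>
definition subst_inv :: "nat \<Rightarrow> 'a::field poly poly \<Rightarrow> 'a fls poly" where
  "subst_inv N h = map_poly (\<lambda>p. poly (map_poly fls_const p) (fls_X_intpow (- int N))) h"

definition splits :: "'a::field poly \<Rightarrow> bool" where
  "splits P \<longleftrightarrow> (\<exists>rs. P = smult (lead_coeff P) (\<Prod>r\<leftarrow>rs. [:- r, 1:]))"

definition ord_t :: "nat \<Rightarrow> 'a::zero fls \<Rightarrow> rat" where
  "ord_t N a = of_int (fls_subdegree a) / of_nat N"

end

theory Submission
  imports Defs
begin

text \<open>Write \<open>t = s\<^sup>N\<close> and substitute the final \<open>\<pi>\<close>-root \<open>\<sigma> = \<alpha> + \<pi> s\<^sup>D\<close> (so \<open>\<delta> = D/N\<close>) into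
  \<open>f\<^sub>\<xi>\<close> and \<open>g\<close>. This gives Laurent series \<open>H\<^sub>1, H\<^sub>2\<close> in \<open>s\<close> over \<open>K[\<pi>]\<close> with lowest terms
  \<open>F s\<^sup>P\<close> and \<open>G s\<^sup>Q\<close>, where \<open>Q\<close> is the order of \<open>g(\<alpha>)\<close>. Since \<open>\<alpha>\<close> is a root of \<open>f\<^sub>\<xi>\<close>,
  \<open>F(0) = 0\<close>; by the choice of \<open>\<delta>\<close>, \<open>G(0) \<noteq> 0\<close> and \<open>G\<close> is not constant. By the chain rule the
  Jacobian of \<open>(H\<^sub>1, H\<^sub>2)\<close> with respect to \<open>(s, \<pi>)\<close> is the single monomial
  \<open>-Nc s\<^sup>D\<^sup>-\<^sup>N\<^sup>-\<^sup>1\<close>, while its coefficient of \<open>s\<^sup>P\<^sup>+\<^sup>Q\<^sup>-\<^sup>1\<close> is \<open>P F G' - Q F' G\<close>.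
  For a minor root (\<open>Q = 0\<close>) this coefficient vanishes at \<open>\<pi> = 0\<close>, so it cannot be \<open>-Nc\<close>;
  hence it is \<open>0\<close>, forcing \<open>P = 0\<close> and \<open>D > N\<close>. For a major root (\<open>Q < 0\<close>) it cannot vanish,
  as the orders of \<open>P F G'\<close> and \<open>Q F' G\<close> at \<open>\<pi> = 0\<close> differ; hence \<open>P + Q = D - N\<close>, and
  \<open>P > 0\<close> would make \<open>\<xi>\<close> the constant term of \<open>f\<close> at a root of \<open>g\<close>, which excludes only
  finitely many \<open>\<xi>\<close>. So \<open>D < N\<close>.\<close>

unbundle fps_syntax

definition is_ring_hom :: "('a::comm_ring_1 \<Rightarrow> 'b::comm_ring_1) \<Rightarrow> bool" where
  "is_ring_hom h \<longleftrightarrow> h 1 = 1 \<and> (\<forall>a b. h (a + b) = h a + h b) \<and> (\<forall>a b. h (a * b) = h a * h b)"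

lemma hom_1: "is_ring_hom h \<Longrightarrow> h 1 = 1"
  and hom_add: "is_ring_hom h \<Longrightarrow> h (a + b) = h a + h b"
  and hom_mult: "is_ring_hom h \<Longrightarrow> h (a * b) = h a * h b"
  by (simp_all add: is_ring_hom_def)

lemma hom_0: "is_ring_hom h \<Longrightarrow> h 0 = 0"
  using hom_add[of h 0 0] by simp

lemma hom_uminus: "is_ring_hom h \<Longrightarrow> h (- a) = - h a"
  using hom_add[of h a "- a"] hom_0[of h] by (simp add: eq_neg_iff_add_eq_0 add.commute)

lemma hom_diff: "is_ring_hom h \<Longrightarrow> h (a - b) = h a - h b"
  using hom_add[of h a "- b"] hom_uminus[of h b] by simp

lemma hom_sum: "is_ring_hom h \<Longrightarrow> h (sum f A) = (\<Sum>x\<in>A. h (f x))"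
  by (induct A rule: infinite_finite_induct) (auto simp: hom_0 hom_add)

lemma hom_prod_list: "is_ring_hom h \<Longrightarrow> h (prod_list xs) = (\<Prod>x\<leftarrow>xs. h x)"
  by (induct xs) (simp_all add: hom_1 hom_mult)

lemma is_ring_hom_comp: "is_ring_hom h \<Longrightarrow> is_ring_hom k \<Longrightarrow> is_ring_hom (\<lambda>x. k (h x))"
  by (simp add: is_ring_hom_def)

lemma is_ring_hom_const_poly: "is_ring_hom (\<lambda>c::'a::comm_ring_1. [:c:])"
  by (simp add: is_ring_hom_def one_pCons)

lemma map_poly_hom_add: "is_ring_hom h \<Longrightarrow> map_poly h (p + q) = map_poly h p + map_poly h q"
  by (intro poly_eqI) (simp add: coeff_map_poly hom_0 hom_add)

lemma map_poly_hom_diff: "is_ring_hom h \<Longrightarrow> map_poly h (p - q) = map_poly h p - map_poly h q"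
  by (intro poly_eqI) (simp add: coeff_map_poly hom_0 hom_diff)

lemma map_poly_hom_smult: "is_ring_hom h \<Longrightarrow> map_poly h (smult c p) = smult (h c) (map_poly h p)"
  by (intro poly_eqI) (simp add: coeff_map_poly hom_0 hom_mult)

lemma map_poly_hom_mult: "is_ring_hom h \<Longrightarrow> map_poly h (p * q) = map_poly h p * map_poly h q"
  by (induct p rule: pCons_induct)
     (simp_all add: map_poly_pCons hom_0 map_poly_hom_add map_poly_hom_smult)

lemma hom_poly: "is_ring_hom h \<Longrightarrow> h (poly p x) = poly (map_poly h p) (h x)"
  by (induct p rule: pCons_induct) (simp_all add: map_poly_pCons hom_0 hom_add hom_mult)

lemma is_ring_hom_eval: "is_ring_hom h \<Longrightarrow> is_ring_hom (\<lambda>p. poly (map_poly h p) x)"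
  by (simp add: is_ring_hom_def hom_1 map_poly_hom_add map_poly_hom_mult)

lemma poly_map_poly_pcompose:
  "is_ring_hom h \<Longrightarrow> poly (map_poly h (pcompose p q)) z = poly (map_poly h p) (poly (map_poly h q) z)"
  by (induct p rule: pCons_induct)
     (simp_all add: pcompose_pCons map_poly_hom_add map_poly_hom_mult map_poly_pCons hom_0)

lemma poly_prod_list_map: "poly (\<Prod>x\<leftarrow>xs. f x) y = (\<Prod>x\<leftarrow>xs. poly (f x) y)"
  by (induct xs) simp_all

lemma poly_prod_list_linear:
  fixes x :: "'a::comm_ring_1"
  shows "poly (\<Prod>r\<leftarrow>rs. [:- r, 1:]) x = (\<Prod>r\<leftarrow>rs. x - r)"
  by (induct rs) (simp_all add: algebra_simps)

text \<open>Comparing orders of vanishing at \<open>0\<close>: the right-hand side vanishes to order exactly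
  \<open>order 0 F - 1\<close>, the left-hand side to order at least \<open>order 0 F\<close>.\<close>

lemma smult_pderiv_products_neq:
  fixes F G :: "'a::field_char_0 poly"
  assumes F: "F \<noteq> 0" "poly F 0 = 0" and G: "poly G 0 \<noteq> 0" and q: "q \<noteq> 0"
  shows "smult p (F * pderiv G) \<noteq> smult q (pderiv F * G)"
proof
  assume eq: "smult p (F * pderiv G) = smult q (pderiv F * G)"
  have "degree F \<noteq> 0"
  proof
    assume "degree F = 0"
    then obtain a where "F = [:a:]" by (rule degree_eq_zeroE)
    with F show False by simp
  qed
  then have "pderiv F \<noteq> 0"
    by (simp add: pderiv_eq_0_iff)
  then have rhs: "smult q (pderiv F * G) \<noteq> 0"
    using q G by auto
  have "order 0 (smult q (pderiv F * G)) = order 0 (pderiv F)"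
    using rhs G q by (simp add: order_smult order_mult order_0I)
  also have "\<dots> < order 0 F"
    using order_pderiv[OF F] by simp
  also have "order 0 F \<le> order 0 (smult p (F * pderiv G))"
  proof -
    have "smult p (F * pderiv G) \<noteq> 0" using rhs eq by simp
    then show ?thesis by (auto simp: order_smult order_mult)
  qed
  finally show False using eq by simp
qed

section \<open>Derivations and the chain rule for bivariate polynomials\<close>

definition is_derivation :: "('a::comm_ring_1 \<Rightarrow> 'a) \<Rightarrow> bool" where
  "is_derivation d \<longleftrightarrow> (\<forall>a b. d (a + b) = d a + d b) \<and> (\<forall>a b. d (a * b) = a * d b + d a * b)"

lemma derivation_add: "is_derivation d \<Longrightarrow> d (a + b) = d a + d b"
  and derivation_mult: "is_derivation d \<Longrightarrow> d (a * b) = a * d b + d a * b"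
  by (simp_all add: is_derivation_def)

lemma derivation_0: "is_derivation d \<Longrightarrow> d 0 = 0"
  using derivation_add[of d 0 0] by simp

definition eval_bivariate :: "('a::field \<Rightarrow> 'b::comm_ring_1) \<Rightarrow> 'b \<Rightarrow> 'b \<Rightarrow> 'a poly poly \<Rightarrow> 'b" where
  "eval_bivariate \<iota> x y h = poly (map_poly (\<lambda>p. poly (map_poly \<iota> p) x) h) y"

lemma is_ring_hom_eval_bivariate: "is_ring_hom \<iota> \<Longrightarrow> is_ring_hom (eval_bivariate \<iota> x y)"
  unfolding eval_bivariate_def by (intro is_ring_hom_eval)

lemma eval_bivariate_pCons:
  "is_ring_hom \<iota> \<Longrightarrow> eval_bivariate \<iota> x y (pCons p h) = poly (map_poly \<iota> p) x + y * eval_bivariate \<iota> x y h"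
  by (simp add: eval_bivariate_def map_poly_pCons hom_0 is_ring_hom_eval)

lemma eval_bivariate_const: "is_ring_hom \<iota> \<Longrightarrow> eval_bivariate \<iota> x y [:[:c:]:] = \<iota> c"
  by (simp add: eval_bivariate_def map_poly_pCons hom_0 is_ring_hom_eval)

lemma derivation_poly_map_poly:
  assumes d: "is_derivation d" and \<iota>: "is_ring_hom \<iota>" and const: "\<And>c. d (\<iota> c) = 0"
  shows "d (poly (map_poly \<iota> p) x) = poly (map_poly \<iota> (pderiv p)) x * d x"
proof (induct p rule: pCons_induct)
  case 0
  then show ?case by (simp add: derivation_0[OF d])
next
  case (pCons a p)
  then show ?case
    by (simp add: map_poly_pCons hom_0[OF \<iota>] pderiv_pCons map_poly_hom_add[OF \<iota>]
        derivation_add[OF d] derivation_mult[OF d] const algebra_simps)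
qed

lemma derivation_eval_bivariate:
  assumes d: "is_derivation d" and \<iota>: "is_ring_hom \<iota>" and const: "\<And>c. d (\<iota> c) = 0"
  shows "d (eval_bivariate \<iota> x y h) =
    eval_bivariate \<iota> x y (partial_x h) * d x + eval_bivariate \<iota> x y (partial_y h) * d y"
proof (induct h rule: pCons_induct)
  case 0
  then show ?case by (simp add: eval_bivariate_def derivation_0[OF d] partial_x_def partial_y_def)
next
  case (pCons p h)
  have "partial_x (pCons p h) = pCons (pderiv p) (partial_x h)"
    and "partial_y (pCons p h) = h + pCons 0 (partial_y h)"
    by (simp_all add: partial_x_def partial_y_def map_poly_pCons pderiv_pCons)
  with pCons show ?case
    by (simp add: eval_bivariate_pCons[OF \<iota>] hom_add[OF is_ring_hom_eval_bivariate[OF \<iota>]]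
        derivation_add[OF d] derivation_mult[OF d] derivation_poly_map_poly[OF d \<iota> const]
        algebra_simps)
qed

lemma partial_x_diff_const: "partial_x (h - [:[:a:]:]) = partial_x h"
  by (intro poly_eqI) (simp add: partial_x_def coeff_map_poly pderiv_diff coeff_pCons split: nat.splits)

lemma partial_y_diff_const: "partial_y (h - [:[:a:]:]) = partial_y h"
  by (simp add: partial_y_def pderiv_diff pderiv_pCons)

lemma jacobian_eval_bivariate:
  assumes \<iota>: "is_ring_hom \<iota>"
    and d1: "is_derivation d1" "\<And>c. d1 (\<iota> c) = 0" and d2: "is_derivation d2" "\<And>c. d2 (\<iota> c) = 0"
  shows "d1 (eval_bivariate \<iota> x y h1) * d2 (eval_bivariate \<iota> x y h2)
       - d2 (eval_bivariate \<iota> x y h1) * d1 (eval_bivariate \<iota> x y h2) =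
    (d1 x * d2 y - d2 x * d1 y) *
      eval_bivariate \<iota> x y (partial_x h1 * partial_y h2 - partial_y h1 * partial_x h2)"
  using is_ring_hom_eval_bivariate[OF \<iota>, of x y]
  by (simp add: derivation_eval_bivariate[OF d1(1) \<iota> d1(2)]
      derivation_eval_bivariate[OF d2(1) \<iota> d2(2)] hom_diff hom_mult algebra_simps)

lemma is_ring_hom_fls_const: "is_ring_hom (fls_const :: 'a::comm_ring_1 \<Rightarrow> 'a fls)"
proof -
  have "fls_const (x + y) = fls_const x + fls_const y" for x y :: 'a
    by (rule fls_eqI) simp
  then show ?thesis by (simp add: is_ring_hom_def)
qed

lemma is_ring_hom_fls_compose_power:
  "k > 0 \<Longrightarrow> is_ring_hom (\<lambda>a::'a::idom fls. fls_compose_power a k)"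
  by (simp add: is_ring_hom_def)

text \<open>Zero coefficients are kept zero even if \<open>h 0 \<noteq> 0\<close>, so that the support stays bounded below.\<close>

lift_definition fls_map :: "('a::zero \<Rightarrow> 'b::zero) \<Rightarrow> 'a fls \<Rightarrow> 'b fls" is
  "\<lambda>h f n. if f n = 0 then 0 else h (f n)"
  by (auto elim: eventually_mono)

lemma fls_map_nth: "h 0 = 0 \<Longrightarrow> fls_map h f $$ n = h (f $$ n)"
  by transfer auto

lemma fls_times_nth_bound:
  fixes f g :: "'a::comm_ring_1 fls"
  assumes "\<forall>i<a. f $$ i = 0" "\<forall>i<b. g $$ i = 0"
  shows "(f * g) $$ n = (\<Sum>i=a..n-b. f $$ i * g $$ (n - i))"
proof (cases "f = 0 \<or> g = 0")
  case True
  then show ?thesis by auto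
next
  case False
  then have a: "a \<le> fls_subdegree f" and b: "b \<le> fls_subdegree g"
    using assms by (auto intro: fls_subdegree_geI)
  have "(f * g) $$ n = (\<Sum>i=fls_subdegree f..n - fls_subdegree g. f $$ i * g $$ (n - i))"
    by (rule fls_times_nth(2))
  also have "\<dots> = (\<Sum>i=a..n-b. f $$ i * g $$ (n - i))"
    by (rule sum.mono_neutral_left) (use a b in \<open>auto simp: not_le\<close>)
  finally show ?thesis .
qed

lemma is_ring_hom_fls_map:
  assumes "is_ring_hom (h :: 'a::comm_ring_1 \<Rightarrow> 'b::comm_ring_1)"
  shows "is_ring_hom (fls_map h)"
proof -
  have h0: "h 0 = 0" using assms by (rule hom_0)
  have "fls_map h (a * b) = fls_map h a * fls_map h b" for a b
  proof (rule fls_eqI)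
    fix n
    have a: "\<forall>i<fls_subdegree a. a $$ i = 0" "\<forall>i<fls_subdegree b. b $$ i = 0" by auto
    have b: "\<forall>i<fls_subdegree a. fls_map h a $$ i = 0" "\<forall>i<fls_subdegree b. fls_map h b $$ i = 0"
      by (auto simp: fls_map_nth h0)
    show "fls_map h (a * b) $$ n = (fls_map h a * fls_map h b) $$ n"
      unfolding fls_map_nth[of h, OF h0] fls_times_nth_bound[OF a, of n] fls_times_nth_bound[OF b, of n]
      by (simp add: hom_sum[OF assms] hom_mult[OF assms] fls_map_nth h0)
  qed
  moreover have "fls_map h (a + b) = fls_map h a + fls_map h b" for a b
    by (rule fls_eqI) (simp add: fls_map_nth h0 hom_add[OF assms])
  moreover have "fls_map h 1 = 1"
    by (rule fls_eqI) (simp add: fls_map_nth h0 hom_1[OF assms])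
  ultimately show ?thesis by (simp add: is_ring_hom_def)
qed

lemma is_derivation_fls_deriv: "is_derivation (fls_deriv :: 'a::comm_ring_1 fls \<Rightarrow> _)"
  by (simp add: is_derivation_def)

lemma fls_deriv_X_intpow:
  "fls_deriv (fls_X_intpow k :: 'a::comm_ring_1 fls) = fls_const (of_int k) * fls_X_intpow (k - 1)"
proof (rule fls_eqI)
  fix n
  show "fls_deriv (fls_X_intpow k :: 'a fls) $$ n = (fls_const (of_int k) * fls_X_intpow (k - 1)) $$ n"
    by (cases "n = k - 1") auto
qed

lemma fls_subdegree_prod_list:
  fixes ws :: "'a::idom fls list"
  assumes "0 \<notin> set ws"
  shows "fls_subdegree (prod_list ws) = (\<Sum>w\<leftarrow>ws. fls_subdegree w)"
  using assms by (induct ws) (auto simp: prod_list_zero_iff)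

lemma fls_prod_list_nth_subdegree:
  fixes ws :: "'a::idom fls list"
  assumes "0 \<notin> set ws"
  shows "prod_list ws $$ (\<Sum>w\<leftarrow>ws. fls_subdegree w) = (\<Prod>w\<leftarrow>ws. w $$ fls_subdegree w)"
  using assms
proof (induct ws)
  case (Cons w ws)
  then show ?case
    using fls_times_base[of w "prod_list ws"] fls_subdegree_prod_list[of ws] by simp
qed simp

section \<open>Laurent series with coefficients in \<open>K[\<pi>]\<close>\<close>

text \<open>The type \<open>'a poly fls\<close> stands for \<open>K[\<pi>]((s))\<close>, and \<open>fls_pderiv\<close> is \<open>\<partial>/\<partial>\<pi>\<close>.\<close>

definition fls_pderiv :: "'a::idom poly fls \<Rightarrow> 'a poly fls" where
  "fls_pderiv = fls_map pderiv"

lemma fls_pderiv_nth: "fls_pderiv f $$ n = pderiv (f $$ n)"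
  by (simp add: fls_pderiv_def fls_map_nth)

lemma is_derivation_fls_pderiv: "is_derivation (fls_pderiv :: 'a::idom poly fls \<Rightarrow> _)"
proof -
  have "fls_pderiv (a * b) = a * fls_pderiv b + fls_pderiv a * b" for a b :: "'a poly fls"
  proof (rule fls_eqI)
    fix n
    have a: "\<forall>i<fls_subdegree a. a $$ i = 0" "\<forall>i<fls_subdegree a. fls_pderiv a $$ i = 0"
      and b: "\<forall>i<fls_subdegree b. b $$ i = 0" "\<forall>i<fls_subdegree b. fls_pderiv b $$ i = 0"
      by (auto simp: fls_pderiv_nth)
    have pderiv_sum: "pderiv (sum f A) = (\<Sum>x\<in>A. pderiv (f x))" for f :: "int \<Rightarrow> 'a poly" and A
      by (induct A rule: infinite_finite_induct) (auto simp: pderiv_add)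
    have "fls_pderiv (a * b) $$ n = (\<Sum>i=fls_subdegree a..n - fls_subdegree b.
        a $$ i * pderiv (b $$ (n - i)) + pderiv (a $$ i) * b $$ (n - i))"
      unfolding fls_pderiv_nth fls_times_nth_bound[OF a(1) b(1), of n] pderiv_sum
      by (simp add: pderiv_mult mult.commute)
    also have "\<dots> = (a * fls_pderiv b + fls_pderiv a * b) $$ n"
      unfolding fls_plus_nth fls_times_nth_bound[OF a(1) b(2), of n] fls_times_nth_bound[OF a(2) b(1), of n]
      by (simp add: sum.distrib fls_pderiv_nth)
    finally show "fls_pderiv (a * b) $$ n = (a * fls_pderiv b + fls_pderiv a * b) $$ n" .
  qed
  moreover have "fls_pderiv (a + b) = fls_pderiv a + fls_pderiv b" for a b :: "'a poly fls"
    by (rule fls_eqI) (simp add: fls_pderiv_nth pderiv_add)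
  ultimately show ?thesis by (simp add: is_derivation_def)
qed

lemma fls_pderiv_const: "fls_pderiv (fls_const [:c:]) = 0"
  by (rule fls_eqI) (simp add: fls_pderiv_nth)

lemma fls_pderiv_X_intpow: "fls_pderiv (fls_X_intpow k :: 'a::idom poly fls) = 0"
  by (rule fls_eqI) (simp add: fls_pderiv_nth)

lemmas is_ring_hom_fls_const_poly = is_ring_hom_comp[OF is_ring_hom_const_poly is_ring_hom_fls_const]

abbreviation fls_lift :: "'a::comm_ring_1 fls \<Rightarrow> 'a poly fls" where
  "fls_lift \<equiv> fls_map (\<lambda>c. [:c:])"

lemma fls_lift_nth: "fls_lift a $$ n = [:a $$ n:]"
  by (simp add: fls_map_nth)

lemmas is_ring_hom_fls_lift = is_ring_hom_fls_map[OF is_ring_hom_const_poly]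

lemma fls_lift_eq_0_iff: "fls_lift a = 0 \<longleftrightarrow> a = 0"
  by (metis fls_eq_iff fls_lift_nth fls_zero_nth pCons_eq_0_iff)

lemma fls_lift_subst_inv:
  fixes h :: "'a::field poly poly"
  shows "poly (map_poly fls_lift (subst_inv N h)) y =
    eval_bivariate (\<lambda>c. fls_const [:c:]) (fls_X_intpow (- int N)) y h"
proof -
  have "fls_lift (poly (map_poly fls_const p) (fls_X_intpow (- int N))) =
      poly (map_poly (\<lambda>c. fls_const [:c:]) p) (fls_X_intpow (- int N))" for p :: "'a poly"
  proof -
    have const: "fls_lift (fls_const c) = fls_const [:c:]" for c :: 'a
      by (simp add: fls_eq_iff fls_lift_nth)
    have X: "fls_lift (fls_X_intpow k) = (fls_X_intpow k :: 'a poly fls)" for k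
      by (simp add: fls_eq_iff fls_lift_nth one_pCons)
    show ?thesis
      unfolding hom_poly[OF is_ring_hom_fls_lift] X
      by (subst map_poly_map_poly) (auto simp: o_def hom_0[OF is_ring_hom_fls_lift] const)
  qed
  then show ?thesis
    unfolding subst_inv_def eval_bivariate_def
    by (simp add: map_poly_map_poly o_def hom_0[OF is_ring_hom_fls_lift])
qed

lemma jacobian_lowest_coeffs:
  fixes H1 H2 :: "'a::idom poly fls"
  defines "J \<equiv> fls_deriv H1 * fls_pderiv H2 - fls_pderiv H1 * fls_deriv H2"
    and "P \<equiv> fls_subdegree H1" and "Q \<equiv> fls_subdegree H2"
  shows "n < P + Q - 1 \<Longrightarrow> J $$ n = 0"
    and "J $$ (P + Q - 1) =
      smult (of_int P) (H1 $$ P * pderiv (H2 $$ Q)) - smult (of_int Q) (pderiv (H1 $$ P) * H2 $$ Q)"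
proof -
  have b1: "\<forall>i<P - 1. fls_deriv H1 $$ i = 0" "\<forall>i<Q. fls_pderiv H2 $$ i = 0"
    and b2: "\<forall>i<P. fls_pderiv H1 $$ i = 0" "\<forall>i<Q - 1. fls_deriv H2 $$ i = 0"
    by (auto simp: P_def Q_def fls_pderiv_nth)
  have J: "J $$ n = (\<Sum>i=P-1..n-Q. fls_deriv H1 $$ i * fls_pderiv H2 $$ (n - i))
     - (\<Sum>i=P..n-(Q-1). fls_pderiv H1 $$ i * fls_deriv H2 $$ (n - i))" for n
    unfolding J_def fls_minus_nth fls_times_nth_bound[OF b1, of n] fls_times_nth_bound[OF b2, of n] ..
  show "n < P + Q - 1 \<Longrightarrow> J $$ n = 0"
    unfolding J by simp
  show "J $$ (P + Q - 1) =
      smult (of_int P) (H1 $$ P * pderiv (H2 $$ Q)) - smult (of_int Q) (pderiv (H1 $$ P) * H2 $$ Q)"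
    unfolding J by (simp add: fls_pderiv_nth of_int_poly mult_ac)
qed

lemma coeff_nth_poly_pi_monomial:
  fixes T :: "'a::field fls poly"
  shows "coeff (poly (map_poly fls_lift T) (fls_const [:0, 1:] * fls_X_intpow D) $$ n) j
           = coeff T j $$ (n - int j * D)"
proof -
  define u :: "'a poly fls" where "u = fls_const [:0, 1:] * fls_X_intpow D"
  have "degree (map_poly fls_lift T) = degree T"
    by (rule degree_map_poly) (simp add: fls_lift_eq_0_iff)
  then have expand: "poly (map_poly fls_lift T) u = (\<Sum>i\<le>degree T. fls_lift (coeff T i) * u ^ i)"
    by (simp add: poly_altdef coeff_map_poly hom_0[OF is_ring_hom_fls_lift])
  have summand: "(fls_lift a * u ^ i) $$ n = monom (a $$ (n - int i * D)) i" for a :: "'a fls" and i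
  proof -
    have "fls_lift a * u ^ i = fls_const ([:0, 1:] ^ i) * (fls_lift a * fls_X_intpow (int i * D))"
      by (simp add: u_def power_mult_distrib fls_const_power fls_X_intpow_power mult_ac)
    then show ?thesis
      by (simp add: fls_X_intpow_times_conv_shift fls_lift_nth monom_altdef mult.commute)
  qed
  have "coeff (poly (map_poly fls_lift T) u $$ n) j =
      (\<Sum>i\<le>degree T. if i = j then coeff T i $$ (n - int i * D) else 0)"
    by (simp add: expand fls_nth_sum summand coeff_sum)
  also have "\<dots> = coeff T j $$ (n - int j * D)"
    by (cases "j \<le> degree T") (auto simp: coeff_eq_0)
  finally show ?thesis by (simp add: u_def)
qed

lemma lift_plus_pi_monomial_lowest:
  fixes a :: "'a::comm_ring_1 fls"
  assumes "a \<noteq> 0" "fls_subdegree a \<le> D"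
  defines "w \<equiv> fls_lift a + fls_const [:0, 1:] * fls_X_intpow D"
  shows "w \<noteq> 0" "fls_subdegree w = fls_subdegree a"
    "w $$ fls_subdegree a = [:a $$ fls_subdegree a:] + (if fls_subdegree a = D then [:0, 1:] else 0)"
proof -
  have nth: "w $$ n = [:a $$ n:] + (if n = D then [:0, 1:] else 0)" for n
    by (simp add: w_def fls_lift_nth)
  have "coeff (w $$ fls_subdegree a) 0 \<noteq> 0"
    using nth_fls_subdegree_nonzero[OF assms(1)] by (auto simp: nth)
  then have nz: "w $$ fls_subdegree a \<noteq> 0" by auto
  then show "w \<noteq> 0" by auto
  show "fls_subdegree w = fls_subdegree a"
    by (rule fls_subdegree_eqI[OF nz]) (use assms(2) in \<open>auto simp: nth\<close>)
  show "w $$ fls_subdegree a = [:a $$ fls_subdegree a:] + (if fls_subdegree a = D then [:0, 1:] else 0)"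
    by (rule nth)
qed

section \<open>The final \<open>\<pi>\<close>-root\<close>

text \<open>Here \<open>t = s\<^sup>N\<close>, so \<open>x = s\<^sup>-\<^sup>N\<close>; \<open>\<xi>\<close> is arbitrary, \<open>A\<close> is a root of \<open>f - \<xi>\<close> that is not a root of
  \<open>g\<close>, and \<open>r0\<close> is a root of \<open>g\<close> closest to \<open>A\<close>, at distance \<open>s\<^sup>D\<close>.\<close>

locale final_pi_root =
  fixes f g :: "'a::field_char_0 poly poly" and c \<xi> :: 'a and N :: nat
    and A r0 :: "'a fls" and rs :: "'a fls list" and D :: int
  assumes jacobian: "partial_x f * partial_y g - partial_y f * partial_x g = [:[:c:]:]"
    and c_nonzero: "c \<noteq> 0" and N_pos: "N > 0"
    and g_splits: "subst_inv N g = (\<Prod>r\<leftarrow>rs. [:- r, 1:])"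
    and A_root: "poly (subst_inv N (f - [:[:\<xi>:]:])) A = 0"
    and A_not_root: "A \<notin> set rs"
    and r0: "r0 \<in> set rs" and D: "fls_subdegree (A - r0) = D"
    and D_max: "\<And>r. r \<in> set rs \<Longrightarrow> fls_subdegree (A - r) \<le> D"
begin

definition \<sigma> :: "'a poly fls" where
  "\<sigma> = fls_lift A + fls_const [:0, 1:] * fls_X_intpow D"

definition H1 :: "'a poly fls" where
  "H1 = poly (map_poly fls_lift (subst_inv N (f - [:[:\<xi>:]:]))) \<sigma>"

definition H2 :: "'a poly fls" where
  "H2 = poly (map_poly fls_lift (subst_inv N g)) \<sigma>"

definition J :: "'a poly fls" where
  "J = fls_deriv H1 * fls_pderiv H2 - fls_pderiv H1 * fls_deriv H2"

abbreviation "P \<equiv> fls_subdegree H1"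
abbreviation "Q \<equiv> fls_subdegree H2"
abbreviation "F \<equiv> H1 $$ P"
abbreviation "G \<equiv> H2 $$ Q"

lemma J_nth: "J $$ n = (if n = D - int N - 1 then [:- (of_nat N * c):] else 0)"
proof -
  define X :: "'a poly fls" where "X = fls_X_intpow (- int N)"
  have H: "H1 = eval_bivariate (\<lambda>c. fls_const [:c:]) X \<sigma> (f - [:[:\<xi>:]:])"
    "H2 = eval_bivariate (\<lambda>c. fls_const [:c:]) X \<sigma> g"
    unfolding H1_def H2_def X_def by (rule fls_lift_subst_inv)+
  have "fls_pderiv \<sigma> = fls_X_intpow D"
    by (rule fls_eqI) (simp add: \<sigma>_def fls_pderiv_nth fls_lift_nth pderiv_add pderiv_pCons)
  moreover have "fls_pderiv X = 0"
    unfolding X_def by (rule fls_pderiv_X_intpow)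
  ultimately have "J = (fls_deriv X * fls_X_intpow D) * fls_const [:c:]"
    using jacobian_eval_bivariate[OF is_ring_hom_fls_const_poly is_derivation_fls_deriv fls_deriv_const
        is_derivation_fls_pderiv fls_pderiv_const, of X \<sigma> "f - [:[:\<xi>:]:]" g]
    by (simp add: J_def H partial_x_diff_const
        partial_y_diff_const jacobian eval_bivariate_const[OF is_ring_hom_fls_const_poly])
  also have "\<dots> = fls_const (of_int (- int N) * [:c:]) * fls_X_intpow (- int N - 1 + D)"
  proof -
    have "fls_const a * fls_X_intpow k * fls_X_intpow D * fls_const b =
        fls_const (a * b) * fls_X_intpow (k + D)" for a b :: "'a poly" and k
      by (simp add: fls_X_intpow_times_fls_X_intpow mult.assoc flip: fls_const_mult_const)
    then show ?thesis
      unfolding X_def fls_deriv_X_intpow by this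
  qed
  finally show ?thesis by (simp add: of_int_poly)
qed

lemma J_nonzero: "J \<noteq> 0"
  using J_nth[of "D - int N - 1"] c_nonzero N_pos by auto

lemma H1_nonzero: "H1 \<noteq> 0"
  using J_nonzero by (auto simp: J_def derivation_0[OF is_derivation_fls_pderiv])

lemma H2_eq_prod: "H2 = (\<Prod>r\<leftarrow>rs. \<sigma> - fls_lift r)"
  unfolding H2_def g_splits
  using hom_prod_list[OF is_ring_hom_eval[OF is_ring_hom_fls_lift], of _ \<sigma>]
  by (simp add: o_def map_poly_pCons hom_0[OF is_ring_hom_fls_lift]
      hom_uminus[OF is_ring_hom_fls_lift] hom_1[OF is_ring_hom_fls_lift])

definition lowest_factor :: "'a fls \<Rightarrow> 'a poly" where
  "lowest_factor r =
    [:(A - r) $$ fls_subdegree (A - r):] + (if fls_subdegree (A - r) = D then [:0, 1:] else 0)"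

lemma root_factor_lowest:
  assumes "r \<in> set rs"
  shows "\<sigma> - fls_lift r \<noteq> 0" and "fls_subdegree (\<sigma> - fls_lift r) = fls_subdegree (A - r)"
    and "(\<sigma> - fls_lift r) $$ fls_subdegree (A - r) = lowest_factor r"
proof -
  have "\<sigma> - fls_lift r = fls_lift (A - r) + fls_const [:0, 1:] * fls_X_intpow D"
    by (simp add: \<sigma>_def hom_diff[OF is_ring_hom_fls_lift])
  moreover have "A - r \<noteq> 0"
    using A_not_root assms by auto
  ultimately show "\<sigma> - fls_lift r \<noteq> 0" "fls_subdegree (\<sigma> - fls_lift r) = fls_subdegree (A - r)"
    "(\<sigma> - fls_lift r) $$ fls_subdegree (A - r) = lowest_factor r"
    using lift_plus_pi_monomial_lowest[of "A - r" D] D_max[OF assms]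
    unfolding lowest_factor_def by simp_all
qed

lemma Q_eq: "Q = fls_subdegree (poly (subst_inv N g) A)"
proof -
  have "0 \<notin> set (map (\<lambda>r. \<sigma> - fls_lift r) rs)" "0 \<notin> set (map (\<lambda>r. A - r) rs)"
    using root_factor_lowest(1) A_not_root by auto
  then show ?thesis
    by (simp add: H2_eq_prod g_splits poly_prod_list_linear fls_subdegree_prod_list o_def
        root_factor_lowest(2) cong: map_cong)
qed

lemma G_eq_prod: "G = (\<Prod>r\<leftarrow>rs. lowest_factor r)"
proof -
  let ?ws = "map (\<lambda>r. \<sigma> - fls_lift r) rs"
  have ws: "0 \<notin> set ?ws"
    using root_factor_lowest(1) by auto
  have "G = prod_list ?ws $$ (\<Sum>w\<leftarrow>?ws. fls_subdegree w)"
    by (simp add: H2_eq_prod fls_subdegree_prod_list[OF ws])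
  also have "\<dots> = (\<Prod>w\<leftarrow>?ws. w $$ fls_subdegree w)"
    by (rule fls_prod_list_nth_subdegree[OF ws])
  also have "\<dots> = (\<Prod>r\<leftarrow>rs. lowest_factor r)"
    unfolding map_map o_def
    by (intro arg_cong[where f = prod_list] map_cong)
      (simp_all add: root_factor_lowest(2,3) del: fls_minus_nth)
  finally show ?thesis .
qed

lemma G_at_0: "poly G 0 \<noteq> 0"
proof -
  have "poly (lowest_factor r) 0 \<noteq> 0" if "r \<in> set rs" for r
    using nth_fls_subdegree_nonzero[of "A - r"] A_not_root that
    by (auto simp: lowest_factor_def)
  then show ?thesis
    by (auto simp: G_eq_prod poly_prod_list_map prod_list_zero_iff)
qed

lemma pderiv_G_nonzero: "pderiv G \<noteq> 0"
proof
  assume "pderiv G = 0"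
  then obtain a where "G = [:a:]"
    by (auto simp: pderiv_eq_0_iff elim: degree_eq_zeroE)
  moreover have "poly (lowest_factor r0) (- ((A - r0) $$ D)) = 0"
    using D by (simp add: lowest_factor_def)
  then have "poly G (- ((A - r0) $$ D)) = 0"
    using r0 by (auto simp: G_eq_prod poly_prod_list_map prod_list_zero_iff)
  ultimately show False
    using G_at_0 by simp
qed

definition taylor :: "'a fls poly" where
  "taylor = pcompose (subst_inv N (f - [:[:\<xi>:]:])) [:A, 1:]"

lemma coeff_H1: "coeff (H1 $$ n) j = coeff taylor j $$ (n - int j * D)"
proof -
  have "subst_inv N (f - [:[:\<xi>:]:]) = pcompose taylor [:- A, 1:]"
    by (simp add: taylor_def pcompose_pCons flip: pcompose_assoc)
  then have "H1 = poly (map_poly fls_lift taylor) (poly (map_poly fls_lift [:- A, 1:]) \<sigma>)"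
    by (simp add: H1_def poly_map_poly_pcompose[OF is_ring_hom_fls_lift])
  also have "poly (map_poly fls_lift [:- A, 1:]) \<sigma> = fls_const [:0, 1:] * fls_X_intpow D"
    by (simp add: map_poly_pCons \<sigma>_def hom_0[OF is_ring_hom_fls_lift]
        hom_uminus[OF is_ring_hom_fls_lift] hom_1[OF is_ring_hom_fls_lift])
  finally show ?thesis
    by (simp add: coeff_nth_poly_pi_monomial)
qed

lemma F_at_0: "poly F 0 = 0"
proof -
  have "coeff taylor 0 = 0"
    using A_root by (simp add: taylor_def poly_pcompose flip: poly_0_coeff_0)
  then show ?thesis
    by (simp add: coeff_H1 poly_0_coeff_0)
qed

lemma F_nonzero: "F \<noteq> 0"
  using H1_nonzero by simp

lemma lowest_jacobian_coeff:
  "P + Q \<le> D - int N \<and> smult (of_int P) (F * pderiv G) - smult (of_int Q) (pderiv F * G) =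
    (if P + Q = D - int N then [:- (of_nat N * c):] else 0)"
proof -
  have "P + Q - 1 \<le> D - int N - 1"
  proof (rule ccontr)
    assume "\<not> ?thesis"
    then have "J $$ (D - int N - 1) = 0"
      unfolding J_def by (intro jacobian_lowest_coeffs(1)) simp
    with J_nth[of "D - int N - 1"] c_nonzero N_pos show False by simp
  qed
  then show ?thesis
    using jacobian_lowest_coeffs(2)[of H1 H2] J_nth[of "P + Q - 1"] by (simp add: J_def)
qed

lemma minor_root: "Q = 0 \<Longrightarrow> int N < D"
proof -
  assume Q: "Q = 0"
  then have eq: "smult (of_int P) (F * pderiv G) =
      (if P + Q = D - int N then [:- (of_nat N * c):] else 0)"
    and le: "P + Q \<le> D - int N"
    using lowest_jacobian_coeff by simp_all
  have "P + Q \<noteq> D - int N"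
  proof
    assume "P + Q = D - int N"
    then have "poly (smult (of_int P) (F * pderiv G)) 0 = - (of_nat N * c)"
      by (simp add: eq)
    with F_at_0 c_nonzero N_pos show False by simp
  qed
  moreover have "P = 0"
    using eq calculation F_nonzero pderiv_G_nonzero by simp
  ultimately show ?thesis
    using Q le by simp
qed

lemma major_root: "Q < 0 \<Longrightarrow> D < int N \<or> 0 < P"
proof -
  assume "Q < 0"
  then have "smult (of_int P) (F * pderiv G) \<noteq> smult (of_int Q) (pderiv F * G)"
    by (intro smult_pderiv_products_neq F_nonzero F_at_0 G_at_0) simp
  then have "P + Q = D - int N"
    using lowest_jacobian_coeff by (auto split: if_splits)
  with \<open>Q < 0\<close> show ?thesis by linarith
qed

text \<open>If \<open>H\<^sub>1\<close> has no terms of order \<open>\<le> 0\<close>, the \<open>k\<close>-th Taylor coefficient of \<open>f\<^sub>\<xi>\<close> at \<open>A\<close>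
  has order \<open>\<ge> 1 - kD\<close>, while \<open>(r0 - A)\<^sup>k\<close> has order \<open>kD\<close>.\<close>

lemma positive_order_at_closest_root:
  assumes "0 < P" and "n \<le> 0"
  shows "poly (subst_inv N (f - [:[:\<xi>:]:])) r0 $$ n = 0"
proof -
  have taylor_low: "coeff taylor k $$ i = 0" if "i < 1 - int k * D" for k i
    using coeff_H1[of "i + int k * D" k] assms(1) that by simp
  have pow_low: "((r0 - A) ^ k) $$ i = 0" if "i < int k * D" for k i
    using that D by (simp add: fls_subdegree_pow fls_subdegree_minus_sym)
  have "(coeff taylor k * (r0 - A) ^ k) $$ n = 0" for k
  proof -
    have "\<forall>i<1 - int k * D. coeff taylor k $$ i = 0" "\<forall>i<int k * D. ((r0 - A) ^ k) $$ i = 0"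
      using taylor_low pow_low by blast+
    from fls_times_nth_bound[OF this] show ?thesis
      using \<open>n \<le> 0\<close> by simp
  qed
  moreover have "poly (subst_inv N (f - [:[:\<xi>:]:])) r0 =
      (\<Sum>k\<le>degree taylor. coeff taylor k * (r0 - A) ^ k)"
    by (simp add: taylor_def poly_pcompose flip: poly_altdef)
  ultimately show ?thesis
    by (simp add: fls_nth_sum)
qed

end

section \<open>Constant terms of \<open>f\<close> at the roots of \<open>g\<close>\<close>

lemma coeff_subst_inv:
  "coeff (subst_inv N h) i = poly (map_poly fls_const (coeff h i)) (fls_X_intpow (- int N))"
  unfolding subst_inv_def
  by (simp add: coeff_map_poly hom_0[OF is_ring_hom_eval[OF is_ring_hom_fls_const]])

lemma subst_inv_diff_const: "subst_inv N (h - [:[:a:]:]) = subst_inv N h - [:fls_const a:]"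
  unfolding subst_inv_def
  by (simp add: map_poly_hom_diff[OF is_ring_hom_eval[OF is_ring_hom_fls_const]] map_poly_pCons
      hom_0[OF is_ring_hom_eval[OF is_ring_hom_fls_const]])

lemma subst_inv_monic:
  assumes "lead_coeff g = 1"
  shows "degree (subst_inv N g) = degree g" "lead_coeff (subst_inv N g) = 1"
proof -
  have top: "coeff (subst_inv N g) (degree g) = 1"
    using assms by (simp add: coeff_subst_inv)
  moreover have "degree (subst_inv N g) \<le> degree g"
    by (rule degree_le) (simp add: coeff_subst_inv coeff_eq_0)
  ultimately show "degree (subst_inv N g) = degree g"
    by (simp add: le_antisym le_degree)
  with top show "lead_coeff (subst_inv N g) = 1" by simp
qed

text \<open>Passing from \<open>t\<^sup>1\<^sup>/\<^sup>N\<close> to \<open>t\<^sup>1\<^sup>/\<^sup>(\<^sup>N\<^sup>k\<^sup>)\<close> is the substitution \<open>s \<mapsto> s\<^sup>k\<close>.\<close>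

lemma fls_compose_power_subst_inv:
  fixes h :: "'a::field poly poly"
  assumes k: "k > 0"
  shows "fls_compose_power (poly (subst_inv N h) B) k =
    poly (subst_inv (N * k) h) (fls_compose_power B k)"
proof -
  note hom = is_ring_hom_fls_compose_power[OF k]
  have const: "(\<lambda>x. fls_compose_power (fls_const x) k) = (fls_const :: 'a \<Rightarrow> _)"
    using k by auto
  have e: "(\<lambda>p::'a poly. fls_compose_power (poly (map_poly fls_const p) (fls_X_intpow (- int N))) k)
      = (\<lambda>p. poly (map_poly fls_const p) (fls_X_intpow (- int (N * k))))"
    unfolding hom_poly[OF hom] using k const
    by (intro ext, subst map_poly_map_poly) (simp_all add: o_def mult_ac)
  show ?thesis
    unfolding hom_poly[OF hom] subst_inv_def
    by (subst map_poly_map_poly)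
      (use k e in \<open>simp_all add: o_def hom_0[OF is_ring_hom_eval[OF is_ring_hom_fls_const]]\<close>)
qed

definition constant_terms_at_roots :: "nat \<Rightarrow> 'a::field poly poly \<Rightarrow> 'a poly poly \<Rightarrow> 'a set" where
  "constant_terms_at_roots N f g = {poly (subst_inv N f) B $$ 0 | B. poly (subst_inv N g) B = 0}"

lemma constant_terms_at_roots_bounded:
  assumes "lead_coeff g = 1"
  shows "finite (constant_terms_at_roots N f g)" and "card (constant_terms_at_roots N f g) \<le> degree g"
proof -
  have g: "subst_inv N g \<noteq> 0" "degree (subst_inv N g) = degree g"
    using subst_inv_monic[OF assms, of N] by auto
  have eq: "constant_terms_at_roots N f g =
      (\<lambda>B. poly (subst_inv N f) B $$ 0) ` {B. poly (subst_inv N g) B = 0}"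
    by (auto simp: constant_terms_at_roots_def)
  show "finite (constant_terms_at_roots N f g)"
    unfolding eq using poly_roots_finite[OF g(1)] by simp
  have "card (constant_terms_at_roots N f g) \<le> card {B. poly (subst_inv N g) B = 0}"
    unfolding eq using poly_roots_finite[OF g(1)] by (rule card_image_le)
  also have "\<dots> \<le> degree g"
    using card_poly_roots_bound[OF g(1)] g(2) by simp
  finally show "card (constant_terms_at_roots N f g) \<le> degree g" .
qed

lemma constant_terms_at_roots_mono:
  assumes "k > 0"
  shows "constant_terms_at_roots N f g \<subseteq> constant_terms_at_roots (N * k) f g"
proof
  fix \<xi> assume "\<xi> \<in> constant_terms_at_roots N f g"
  then obtain B where B: "poly (subst_inv N g) B = 0" "\<xi> = poly (subst_inv N f) B $$ 0"
    by (auto simp: constant_terms_at_roots_def)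
  then have "poly (subst_inv (N * k) g) (fls_compose_power B k) = 0"
    "\<xi> = poly (subst_inv (N * k) f) (fls_compose_power B k) $$ 0"
    using assms by (simp_all flip: fls_compose_power_subst_inv add: fls_nth_compose_power)
  then show "\<xi> \<in> constant_terms_at_roots (N * k) f g"
    by (auto simp: constant_terms_at_roots_def)
qed

text \<open>Any finitely many of these values already occur for a single common \<open>N\<close>.\<close>

lemma finite_UN_constant_terms_at_roots:
  assumes "lead_coeff g = 1"
  shows "finite (\<Union>N\<in>{0<..}. constant_terms_at_roots N f g)" (is "finite ?E")
proof (rule ccontr)
  assume "infinite ?E"
  then obtain S where S: "finite S" "card S = Suc (degree g)" "S \<subseteq> ?E"
    using infinite_arbitrarily_large by blast
  then obtain n where n: "\<And>\<xi>. \<xi> \<in> S \<Longrightarrow> n \<xi> > 0 \<and> \<xi> \<in> constant_terms_at_roots (n \<xi>) f g"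
    by (metis (mono_tags) UN_E greaterThan_iff subsetD)
  define M where "M = (\<Prod>\<xi>\<in>S. n \<xi>)"
  have "M > 0"
    using n by (simp add: M_def prod_pos)
  have sub: "S \<subseteq> constant_terms_at_roots M f g"
  proof
    fix \<xi> assume "\<xi> \<in> S"
    then have "n \<xi> dvd M"
      using S(1) by (simp add: M_def dvd_prodI)
    then obtain k where "M = n \<xi> * k" ..
    moreover have "k > 0"
      using calculation \<open>M > 0\<close> by (simp add: gr0I)
    ultimately show "\<xi> \<in> constant_terms_at_roots M f g"
      using n[OF \<open>\<xi> \<in> S\<close>] constant_terms_at_roots_mono by blast
  qed
  have "card S \<le> degree g"
    using card_mono[OF constant_terms_at_roots_bounded(1)[OF assms] sub]
      constant_terms_at_roots_bounded(2)[OF assms] by (rule le_trans)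
  with S(2) show False by simp
qed

section \<open>Major and minor roots\<close>

lemma jacobian_degree_pos:
  assumes "partial_x f * partial_y g - partial_y f * partial_x g = [:[:c:]:]" and "c \<noteq> 0"
    and "lead_coeff g = 1"
  shows "degree g > 0"
proof (rule ccontr)
  assume "\<not> degree g > 0"
  then have "g = 1"
    using assms(3) by (metis degree_0_id gr0I one_pCons)
  then have "partial_x g = 0" "partial_y g = 0"
    by (simp_all add: partial_x_def partial_y_def one_pCons map_poly_pCons)
  with assms(1,2) show False
    by simp
qed

lemma max_ord_t_distance_to_roots:
  fixes A :: "'a::field fls"
  assumes "rs \<noteq> []" and "N > 0"
  obtains r0 D where "r0 \<in> set rs" "fls_subdegree (A - r0) = D"
    "\<And>r. r \<in> set rs \<Longrightarrow> fls_subdegree (A - r) \<le> D"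
    "Max {ord_t N (A - B) | B. poly (\<Prod>r\<leftarrow>rs. [:- r, 1:]) B = 0} = of_int D / of_nat N"
proof -
  define D where "D = Max ((\<lambda>r. fls_subdegree (A - r)) ` set rs)"
  have "D \<in> (\<lambda>r. fls_subdegree (A - r)) ` set rs"
    unfolding D_def using assms(1) by (intro Max_in) auto
  then obtain r0 where r0: "r0 \<in> set rs" "fls_subdegree (A - r0) = D" by auto
  have D_max: "fls_subdegree (A - r) \<le> D" if "r \<in> set rs" for r
    unfolding D_def using that by auto
  have "{ord_t N (A - B) | B. poly (\<Prod>r\<leftarrow>rs. [:- r, 1:]) B = 0} = (\<lambda>r. ord_t N (A - r)) ` set rs"
    by (auto simp: poly_prod_list_linear prod_list_zero_iff)
  also have "Max \<dots> = of_int D / of_nat N"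
  proof (rule Max_eqI)
    show "of_int D / of_nat N \<in> (\<lambda>r. ord_t N (A - r)) ` set rs"
      using r0 by (force simp: ord_t_def)
  qed (use D_max assms(2) in \<open>auto simp: ord_t_def intro!: divide_right_mono\<close>)
  finally show ?thesis
    using that r0 D_max by blast
qed

lemma root_distance_major_minor:
  fixes f g :: "'a::field_char_0 poly poly"
  assumes jacobian: "partial_x f * partial_y g - partial_y f * partial_x g = [:[:c:]:]"
    and "c \<noteq> 0" and monic: "lead_coeff g = 1"
    and "N > 0" and "splits (subst_inv N g)"
    and A_root: "poly (subst_inv N (f - [:[:\<xi>:]:])) A = 0"
    and gA: "poly (subst_inv N g) A \<noteq> 0"
    and generic: "\<xi> \<notin> constant_terms_at_roots N f g"
  defines "\<delta> \<equiv> Max {ord_t N (A - B) | B. poly (subst_inv N g) B = 0}"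
  shows "ord_t N (poly (subst_inv N g) A) < 0 \<Longrightarrow> \<delta> < 1"
    and "ord_t N (poly (subst_inv N g) A) = 0 \<Longrightarrow> \<delta> > 1"
proof -
  obtain rs where g_splits: "subst_inv N g = (\<Prod>r\<leftarrow>rs. [:- r, 1:])"
    using \<open>splits (subst_inv N g)\<close> subst_inv_monic[OF monic] by (auto simp: splits_def)
  have "rs \<noteq> []"
    using g_splits subst_inv_monic(1)[OF monic, of N]
      jacobian_degree_pos[OF jacobian \<open>c \<noteq> 0\<close> monic] by auto
  then obtain r0 D where r0: "r0 \<in> set rs" "fls_subdegree (A - r0) = D"
    and D_max: "\<And>r. r \<in> set rs \<Longrightarrow> fls_subdegree (A - r) \<le> D"
    and \<delta>: "\<delta> = of_int D / of_nat N"
    using max_ord_t_distance_to_roots[OF _ \<open>N > 0\<close>, of rs A] unfolding \<delta>_def g_splits by blast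
  have "A \<notin> set rs"
    using gA by (auto simp: g_splits poly_prod_list_linear prod_list_zero_iff)
  then interpret final_pi_root f g c \<xi> N A r0 rs D
    using jacobian \<open>c \<noteq> 0\<close> \<open>N > 0\<close> A_root r0 D_max g_splits by unfold_locales
  have ord: "ord_t N (poly (subst_inv N g) A) = of_int Q / of_nat N"
    by (simp add: ord_t_def Q_eq)
  show "\<delta> < 1" if "ord_t N (poly (subst_inv N g) A) < 0"
  proof -
    have "\<not> 0 < P"
    proof
      assume "0 < P"
      then have "poly (subst_inv N f) r0 $$ 0 = \<xi>"
        using positive_order_at_closest_root[of 0] by (simp add: subst_inv_diff_const)
      with r0(1) g_splits generic show False
        by (auto simp: constant_terms_at_roots_def poly_prod_list_linear prod_list_zero_iff)
    qed
    with major_root that \<open>N > 0\<close> have "D < int N"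
      by (auto simp: ord divide_less_0_iff)
    with \<open>N > 0\<close> show ?thesis by (simp add: \<delta>)
  qed
  show "\<delta> > 1" if "ord_t N (poly (subst_inv N g) A) = 0"
    using minor_root that \<open>N > 0\<close> by (simp add: ord \<delta>)
qed

theorem lemma4p4:
  fixes f g :: "'a::{alg_closed_field, field_char_0} poly poly"
  assumes "jacobian_pair f g"
  shows "\<exists>E. finite E \<and> (\<forall>\<xi>. \<xi> \<notin> E \<longrightarrow>
    (\<forall>N A. N > 0 \<longrightarrow> splits (subst_inv N g) \<longrightarrow>
       poly (subst_inv N (f - [:[:\<xi>:]:])) A = 0 \<longrightarrow>
       (let gA = poly (subst_inv N g) A;
            \<delta> = Max {ord_t N (A - B) | B. poly (subst_inv N g) B = 0}
        in (gA \<noteq> 0 \<and> ord_t N gA < 0 \<longrightarrow> \<delta> < 1) \<and>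
           (gA \<noteq> 0 \<and> ord_t N gA = 0 \<longrightarrow> \<delta> > 1))))"
proof -
  obtain c where monic: "lead_coeff g = 1" and "c \<noteq> 0"
    and jacobian: "partial_x f * partial_y g - partial_y f * partial_x g = [:[:c:]:]"
    using assms unfolding jacobian_pair_def by blast
  let ?E = "\<Union>N\<in>{0<..}. constant_terms_at_roots N f g"
  show ?thesis
  proof (intro exI[of _ ?E] conjI allI impI)
    show "finite ?E"
      using monic by (rule finite_UN_constant_terms_at_roots)
    fix \<xi> N A
    assume "\<xi> \<notin> ?E" "N > 0" "splits (subst_inv N g)" "poly (subst_inv N (f - [:[:\<xi>:]:])) A = 0"
    then show "let gA = poly (subst_inv N g) A;
            \<delta> = Max {ord_t N (A - B) | B. poly (subst_inv N g) B = 0}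
        in (gA \<noteq> 0 \<and> ord_t N gA < 0 \<longrightarrow> \<delta> < 1) \<and> (gA \<noteq> 0 \<and> ord_t N gA = 0 \<longrightarrow> \<delta> > 1)"
      using root_distance_major_minor[OF jacobian \<open>c \<noteq> 0\<close> monic, of N \<xi> A]
      unfolding Let_def by blast
  qed
qed

end
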